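(* Let $\rho\in(0,1)$, $h>0$, $\delta\ge0$, and $\hat S_\rho=(I+\rho^{-2}\widehat\Pi)^{1/2}$. If $\operatorname{tr}\big((I-\widehat\Pi)\Pi^*\big)\le\delta^2$, then for every $x\in\mathbb R^d$, $|\hat S_\rho x|\le h$ implies $|\Pi^*x|\le(\rho+\delta)h$.
   Context: $\Pi^*$ is the orthogonal projector onto an $m^*$-dimensional subspace of $\mathbb R^d$. $I$ is the $d\times d$ identity, $|\cdot|$ the Euclidean norm, $A\preceq B$ means $B-A$ is positive semidefinite. Let $\hat\beta_1,\dots,\hat\beta_L\in\mathbb R^d$ be arbitrary vectors, $\mathcal A_{m^*}=\{\Pi\in\mathbb R^{d\times d}:\Pi=\Pi^\top,\ 0\preceq\Pi\preceq I,\ \operatorname{tr}\Pi\le m^*\}$, and let $\widehat\Pi$ be a minimizer over $\Pi\in\mathcal A_{m^*}$ of $\max_\ell\hat\beta_\ell^\top(I-\Pi)\hat\beta_\ell$. Square roots are positive semidefinite square roots. *)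

theory Defs
  imports "HOL-Analysis.Analysis"
begin

definition psd :: "real^'n^'n \<Rightarrow> bool" where
  "psd A \<longleftrightarrow> transpose A = A \<and> (\<forall>x. 0 \<le> x \<bullet> (A *v x))"

definition loewner_le :: "real^'n^'n \<Rightarrow> real^'n^'n \<Rightarrow> bool" where
  "loewner_le A B \<longleftrightarrow> psd (B - A)"

definition psd_sqrt :: "real^'n^'n \<Rightarrow> real^'n^'n" where
  "psd_sqrt A = (THE S. psd S \<and> S ** S = A)"

definition orth_proj :: "nat \<Rightarrow> real^'n^'n \<Rightarrow> bool" where
  "orth_proj m P \<longleftrightarrow> transpose P = P \<and> P ** P = P \<and> rank P = m"

definition Aset :: "nat \<Rightarrow> (real^'n^'n) set" where
  "Aset m = {P. transpose P = P \<and> loewner_le 0 P \<and> loewner_le P (mat 1) \<and> trace P \<le> real m}"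

definition objective :: "(nat \<Rightarrow> real^'n) \<Rightarrow> nat \<Rightarrow> real^'n^'n \<Rightarrow> real" where
  "objective beta L P = Max ((\<lambda>l. beta l \<bullet> ((mat 1 - P) *v beta l)) ` {1..L})"

end

theory Submission
  imports Defs
begin

(* Write S for the square root of M = I + rho^-2 Phat. As S is symmetric with S^2 = M,
   |S x|^2 = |x|^2 + rho^-2 x.Phat x, so |S x| <= h gives |x| <= h and x.Phat x <= rho^2 h^2;
   since 0 <= Phat <= I we have |Phat x|^2 <= x.Phat x, hence |Phat x| <= rho h.
   Now split Pstar x = Pstar Phat x + Pstar (I - Phat) x: the first term is at most |Phat x|, and
   for 0 <= Q <= I the trace bound |Pstar Q x|^2 <= tr(Q Pstar) |x|^2 makes the second at most
   delta |x| <= delta h.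
   Existence and uniqueness of the square root come from an orthonormal eigenbasis, built by
   repeatedly maximizing the Rayleigh quotient on invariant subspaces. *)

lemma inner_matrix_vector_symmetric:
  fixes M :: "real^'n^'n"
  assumes "transpose M = M"
  shows "(M *v x) \<bullet> y = x \<bullet> (M *v y)"
  by (metis assms dot_lmul_matrix transpose_matrix_vector)

lemma psdD:
  assumes "psd A"
  shows "transpose A = A" and "0 \<le> x \<bullet> (A *v x)"
  using assms by (auto simp: psd_def)

lemma nonneg_quadratic_discriminant_le:
  fixes a b c :: real
  assumes nonneg: "\<And>t. 0 \<le> a + 2 * b * t + c * t\<^sup>2" and "0 \<le> c"
  shows "b\<^sup>2 \<le> a * c"
proof (cases "c = 0")
  case True
  have "b = 0"
  proof (rule ccontr)
    assume "b \<noteq> 0"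
    have "0 \<le> a + 2 * b * (- (a + 1) / (2 * b))" using nonneg[of "- (a + 1) / (2 * b)"] True by simp
    also have "\<dots> = -1" using \<open>b \<noteq> 0\<close> by (simp add: field_simps)
    finally show False by simp
  qed
  then show ?thesis using True by simp
next
  case False
  then have "c > 0" using \<open>0 \<le> c\<close> by simp
  have "0 \<le> a + 2 * b * (- b / c) + c * (- b / c)\<^sup>2" using nonneg by blast
  also have "\<dots> = (a * c - b\<^sup>2) / c" using \<open>c > 0\<close> by (simp add: field_simps power2_eq_square)
  finally show ?thesis using \<open>c > 0\<close> by (simp add: zero_le_divide_iff)
qed

lemma psd_Cauchy_Schwarz:
  fixes S :: "real^'n^'n"
  assumes "psd S"
  shows "(y \<bullet> (S *v z))\<^sup>2 \<le> (y \<bullet> (S *v y)) * (z \<bullet> (S *v z))"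
proof (rule nonneg_quadratic_discriminant_le)
  fix t :: real
  have "z \<bullet> (S *v y) = y \<bullet> (S *v z)"
    using inner_matrix_vector_symmetric[OF psdD(1)[OF assms]] by (metis inner_commute)
  then have "(y + t *\<^sub>R z) \<bullet> (S *v (y + t *\<^sub>R z))
      = y \<bullet> (S *v y) + 2 * (y \<bullet> (S *v z)) * t + (z \<bullet> (S *v z)) * t\<^sup>2"
    by (simp add: matrix_vector_right_distrib inner_add_left inner_add_right
        matrix_vector_mult_scaleR power2_eq_square algebra_simps)
  then show "0 \<le> y \<bullet> (S *v y) + 2 * (y \<bullet> (S *v z)) * t + (z \<bullet> (S *v z)) * t\<^sup>2"
    using psdD(2)[OF assms, of "y + t *\<^sub>R z"] by simp
qed (use psdD(2)[OF assms] in simp)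

lemma psd_contraction_inner_le:
  fixes A :: "real^'n^'n"
  assumes "psd A" and "psd (mat 1 - A)"
  shows "(A *v x) \<bullet> (A *v x) \<le> x \<bullet> (A *v x)"
proof -
  let ?y = "A *v x"
  have "?y \<bullet> (A *v ?y) \<le> ?y \<bullet> ?y"
    using psdD(2)[OF assms(2), of ?y] by (simp add: matrix_vector_mult_diff_rdistrib inner_diff_right)
  moreover have "(?y \<bullet> ?y)\<^sup>2 \<le> (x \<bullet> (A *v x)) * (?y \<bullet> (A *v ?y))"
    using psd_Cauchy_Schwarz[OF assms(1), of x ?y]
      inner_matrix_vector_symmetric[OF psdD(1)[OF assms(1)], of x ?y] by simp
  ultimately have "(?y \<bullet> ?y)\<^sup>2 \<le> (x \<bullet> (A *v x)) * (?y \<bullet> ?y)"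
    using mult_left_mono[OF _ psdD(2)[OF assms(1), of x]] order_trans by blast
  then show ?thesis
    by (cases "?y \<bullet> ?y = 0") (auto simp: power2_eq_square)
qed

definition orthonormal_eigenbasis :: "real^'n^'n \<Rightarrow> (real^'n) set \<Rightarrow> (real^'n) set \<Rightarrow> bool" where
  "orthonormal_eigenbasis A V B \<longleftrightarrow> finite B \<and> B \<subseteq> V \<and> span B = V \<and> pairwise orthogonal B \<and>
     (\<forall>u\<in>B. norm u = 1 \<and> A *v u = (u \<bullet> (A *v u)) *\<^sub>R u)"

lemma Rayleigh_quotient_max_exists:
  fixes A :: "real^'n^'n"
  assumes "subspace V" and "V \<noteq> {0}"
  shows "\<exists>v\<in>V. norm v = 1 \<and> (\<forall>y\<in>V. y \<bullet> (A *v y) \<le> (v \<bullet> (A *v v)) * (y \<bullet> y))"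
proof -
  define K where "K = V \<inter> sphere 0 1"
  have normalize_in_K: "y /\<^sub>R norm y \<in> K" if "y \<in> V" "y \<noteq> 0" for y
    using assms(1) that by (simp add: K_def subspace_scale)
  have "compact K"
    unfolding K_def using closed_subspace[OF assms(1)] compact_sphere closed_Int_compact by blast
  moreover have "K \<noteq> {}"
    using assms normalize_in_K subspace_0 by blast
  moreover have "continuous_on K (\<lambda>x. x \<bullet> (A *v x))"
    by (intro continuous_on_inner continuous_on_id linear_continuous_on matrix_vector_mul_bounded_linear)
  ultimately obtain v where "v \<in> K" and vmax: "\<And>u. u \<in> K \<Longrightarrow> u \<bullet> (A *v u) \<le> v \<bullet> (A *v v)"
    using continuous_attains_sup by metis
  have "y \<bullet> (A *v y) \<le> (v \<bullet> (A *v v)) * (y \<bullet> y)" if "y \<in> V" for y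
  proof (cases "y = 0")
    case False
    let ?u = "y /\<^sub>R norm y"
    have "y \<bullet> (A *v y) = (norm y)\<^sup>2 * (?u \<bullet> (A *v ?u))"
      using False by (simp add: matrix_vector_mult_scaleR field_simps power2_eq_square)
    also have "\<dots> \<le> (norm y)\<^sup>2 * (v \<bullet> (A *v v))"
      by (rule mult_left_mono[OF vmax[OF normalize_in_K[OF that False]]]) simp
    finally show ?thesis by (simp add: dot_square_norm mult.commute)
  qed simp
  then show ?thesis using \<open>v \<in> K\<close> by (auto simp: K_def)
qed

lemma Rayleigh_quotient_maximizer_eigenvector:
  fixes A :: "real^'n^'n"
  assumes sym: "transpose A = A" and "subspace V" and "\<forall>x\<in>V. A *v x \<in> V"
    and "v \<in> V" and "norm v = 1" and max: "\<forall>y\<in>V. y \<bullet> (A *v y) \<le> (v \<bullet> (A *v v)) * (y \<bullet> y)"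
  shows "A *v v = (v \<bullet> (A *v v)) *\<^sub>R v"
proof -
  define l where "l = v \<bullet> (A *v v)"
  define w where "w = A *v v - l *\<^sub>R v"
  have vv: "v \<bullet> v = 1" using \<open>norm v = 1\<close> by (simp add: dot_square_norm)
  have "w \<in> V" unfolding w_def using assms by (simp add: subspace_diff subspace_scale)
  have vw: "v \<bullet> w = 0" unfolding w_def l_def using vv by (simp add: inner_diff_right)
  have vAw: "v \<bullet> (A *v w) = w \<bullet> w"
  proof -
    have "A *v v = w + l *\<^sub>R v" unfolding w_def by simp
    then show ?thesis
      using vw inner_matrix_vector_symmetric[OF sym, of v w] by (simp add: inner_add_right inner_commute)
  qed
  \<comment> \<open>Perturbing \<open>v\<close> along \<open>w\<close> cannot increase the Rayleigh quotient, which forces \<open>w = 0\<close>.\<close>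
  have "0 \<le> 0 + 2 * (- (w \<bullet> w)) * t + (l * (w \<bullet> w) - w \<bullet> (A *v w)) * t\<^sup>2" for t
  proof -
    have "v + t *\<^sub>R w \<in> V" using \<open>v \<in> V\<close> \<open>w \<in> V\<close> \<open>subspace V\<close> by (simp add: subspace_add subspace_scale)
    moreover have "(v + t *\<^sub>R w) \<bullet> (A *v (v + t *\<^sub>R w)) = l + 2 * t * (w \<bullet> w) + t\<^sup>2 * (w \<bullet> (A *v w))"
      using vAw inner_matrix_vector_symmetric[OF sym, of w v] unfolding l_def
      by (simp add: matrix_vector_right_distrib inner_add_left inner_add_right matrix_vector_mult_scaleR
          power2_eq_square algebra_simps inner_commute)
    moreover have "(v + t *\<^sub>R w) \<bullet> (v + t *\<^sub>R w) = 1 + t\<^sup>2 * (w \<bullet> w)"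
      using vv vw by (simp add: inner_add_left inner_add_right inner_commute power2_eq_square algebra_simps)
    ultimately show ?thesis using max l_def by (fastforce simp: algebra_simps)
  qed
  moreover have "0 \<le> l * (w \<bullet> w) - w \<bullet> (A *v w)" using max \<open>w \<in> V\<close> l_def by simp
  ultimately have "(- (w \<bullet> w))\<^sup>2 \<le> 0 * (l * (w \<bullet> w) - w \<bullet> (A *v w))"
    by (rule nonneg_quadratic_discriminant_le)
  then have "w = 0" by simp
  then show ?thesis unfolding w_def l_def by simp
qed

lemma span_insert_unit_orthogonal_complement:
  assumes "subspace V" and "v \<in> V" and "v \<bullet> v = 1" and B: "span B = {x\<in>V. v \<bullet> x = 0}"
  shows "span (insert v B) = V"
proof
  have "B \<subseteq> V" using B span_superset[of B] by blast
  with \<open>v \<in> V\<close> show "span (insert v B) \<subseteq> V" using \<open>subspace V\<close> by (simp add: span_minimal)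
  show "V \<subseteq> span (insert v B)"
  proof
    fix x assume "x \<in> V"
    have "x - (v \<bullet> x) *\<^sub>R v \<in> span B"
      unfolding B using \<open>x \<in> V\<close> assms(1-3) by (simp add: subspace_diff subspace_scale inner_diff_right)
    then have "x - (v \<bullet> x) *\<^sub>R v \<in> span (insert v B)"
      using span_mono[of B "insert v B"] by blast
    moreover have "(v \<bullet> x) *\<^sub>R v \<in> span (insert v B)" by (simp add: span_base span_mul)
    ultimately have "x - (v \<bullet> x) *\<^sub>R v + (v \<bullet> x) *\<^sub>R v \<in> span (insert v B)"
      by (rule span_add)
    then show "x \<in> span (insert v B)" by simp
  qed
qed

lemma invariant_orthogonal_complement_eigenvector:
  fixes A :: "real^'n^'n"
  assumes "transpose A = A" and "\<forall>x\<in>V. A *v x \<in> V" and "A *v v = \<mu> *\<^sub>R v"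
  shows "\<forall>x\<in>{x\<in>V. v \<bullet> x = 0}. A *v x \<in> {x\<in>V. v \<bullet> x = 0}"
proof
  fix x assume x: "x \<in> {x\<in>V. v \<bullet> x = 0}"
  have "v \<bullet> (A *v x) = \<mu> * (v \<bullet> x)"
    by (metis assms(1,3) inner_matrix_vector_symmetric inner_scaleR_left)
  then show "A *v x \<in> {x\<in>V. v \<bullet> x = 0}" using x assms(2) by auto
qed

lemma orthonormal_eigenbasis_exists:
  fixes A :: "real^'n^'n"
  assumes sym: "transpose A = A"
  shows "subspace V \<Longrightarrow> \<forall>x\<in>V. A *v x \<in> V \<Longrightarrow> \<exists>B. orthonormal_eigenbasis A V B"
proof (induction "dim V" arbitrary: V rule: less_induct)
  case less
  show ?case
  proof (cases "V = {0}")
    case True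
    then show ?thesis by (auto simp: orthonormal_eigenbasis_def intro!: exI[of _ "{}"])
  next
    case False
    obtain v where "v \<in> V" and "norm v = 1" and ev: "A *v v = (v \<bullet> (A *v v)) *\<^sub>R v"
      using Rayleigh_quotient_max_exists[OF less.prems(1) False, of A]
        Rayleigh_quotient_maximizer_eigenvector[OF sym less.prems] by blast
    have vv: "v \<bullet> v = 1" using \<open>norm v = 1\<close> by (simp add: dot_square_norm)
    define W where "W = {x\<in>V. v \<bullet> x = 0}"
    have "subspace W"
      using less.prems(1) unfolding W_def subspace_def by (auto simp: inner_add_right)
    moreover have "\<forall>x\<in>W. A *v x \<in> W"
      using invariant_orthogonal_complement_eigenvector[OF sym less.prems(2) ev] by (simp add: W_def)
    moreover have "dim W < dim V"
    proof (rule dim_psubset)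
      have "v \<in> V - W" using \<open>v \<in> V\<close> vv by (simp add: W_def)
      then have "W \<subset> V" unfolding W_def by blast
      then show "span W \<subset> span V"
        using \<open>subspace W\<close> less.prems(1) by (metis span_eq_iff)
    qed
    ultimately obtain B where B: "orthonormal_eigenbasis A W B"
      using less.hyps by blast
    have "span (insert v B) = V"
      using span_insert_unit_orthogonal_complement[OF less.prems(1) \<open>v \<in> V\<close> vv] B
      by (simp add: orthonormal_eigenbasis_def W_def)
    moreover have "pairwise orthogonal (insert v B)"
      using B by (auto simp: orthonormal_eigenbasis_def W_def pairwise_insert orthogonal_def inner_commute)
    ultimately have "orthonormal_eigenbasis A V (insert v B)"
      using B \<open>v \<in> V\<close> \<open>norm v = 1\<close> ev by (auto simp: orthonormal_eigenbasis_def W_def)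
    then show ?thesis ..
  qed
qed

lemma psd_square_root_on_eigenvector:
  fixes T :: "real^'n^'n"
  assumes "psd T" and "A *v u = \<mu> *\<^sub>R u" and "T ** T = A"
  shows "T *v u = sqrt \<mu> *\<^sub>R u"
proof (cases "u = 0")
  case False
  have TTu: "T *v (T *v u) = \<mu> *\<^sub>R u"
    using assms(2,3) by (simp add: matrix_vector_mul_assoc)
  have TuTu: "(T *v u) \<bullet> (T *v u) = \<mu> * (u \<bullet> u)"
    using inner_matrix_vector_symmetric[OF psdD(1)[OF assms(1)], of u "T *v u"] TTu by simp
  moreover have "0 < u \<bullet> u" using False by simp
  ultimately have "0 \<le> \<mu>" by (metis inner_ge_zero zero_le_mult_iff linorder_not_le)
  show ?thesis
  proof (cases "\<mu> = 0")
    case True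
    then show ?thesis using TuTu by simp
  next
    case False
    define s where "s = sqrt \<mu>"
    have "s > 0" and ss: "s * s = \<mu>"
      using False \<open>0 \<le> \<mu>\<close> by (simp_all add: s_def)
    define w where "w = T *v u - s *\<^sub>R u"
    \<comment> \<open>\<open>(T + s) w = (T\<^sup>2 - s\<^sup>2) u = 0\<close>, and \<open>T + s\<close> is positive definite.\<close>
    have "T *v w = - (s *\<^sub>R w)"
      using TTu ss unfolding w_def
      by (simp add: matrix_vector_mult_diff_distrib matrix_vector_mult_scaleR algebra_simps)
    then have "w \<bullet> (T *v w) = - s * (w \<bullet> w)" by simp
    then have "w \<bullet> w \<le> 0"
      using psdD(2)[OF assms(1), of w] \<open>s > 0\<close> by (simp add: mult_le_0_iff)
    then have "w = 0" by (metis inner_ge_zero inner_eq_zero_iff order_antisym)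
    then show ?thesis by (simp add: w_def s_def)
  qed
qed simp

lemma sum_orthonormal_scaleR_inner:
  fixes B :: "(real^'n) set"
  assumes "finite B" and "pairwise orthogonal B" and "u \<in> B" and "u \<bullet> u = 1"
  shows "(\<Sum>u'\<in>B. (g u' * (u' \<bullet> u)) *\<^sub>R u') = g u *\<^sub>R u"
proof -
  have "(\<Sum>u'\<in>B - {u}. (g u' * (u' \<bullet> u)) *\<^sub>R u') = 0"
    using assms(2,3) by (intro sum.neutral) (auto simp: pairwise_def orthogonal_def)
  then show ?thesis
    using assms by (simp add: sum.remove)
qed

lemma transpose_matrix_sum_scaleR_inner:
  fixes B :: "(real^'n) set"
  shows "transpose (matrix (\<lambda>x. \<Sum>u\<in>B. (g u * (u \<bullet> x)) *\<^sub>R u))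
    = matrix (\<lambda>x. \<Sum>u\<in>B. (g u * (u \<bullet> x)) *\<^sub>R u)"
proof -
  have "matrix (\<lambda>x. \<Sum>u\<in>B. (g u * (u \<bullet> x)) *\<^sub>R u) $ i $ j = (\<Sum>u\<in>B. g u * (u $ j) * (u $ i))" for i j
    by (simp add: matrix_def sum_component inner_axis)
  then show ?thesis by (simp add: vec_eq_iff transpose_def mult.commute mult.left_commute)
qed

lemma psd_square_root_exists:
  fixes A :: "real^'n^'n"
  assumes "psd A"
  shows "\<exists>S. psd S \<and> S ** S = A"
proof -
  obtain B where B: "orthonormal_eigenbasis A UNIV B"
    using orthonormal_eigenbasis_exists[OF psdD(1)[OF assms] subspace_UNIV] by blast
  define ev where "ev u = u \<bullet> (A *v u)" for u
  have uu: "u \<bullet> u = 1" and Au: "A *v u = ev u *\<^sub>R u" if "u \<in> B" for u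
    using B that by (auto simp: orthonormal_eigenbasis_def ev_def dot_square_norm)
  have ev_nonneg: "0 \<le> ev u" for u using psdD(2)[OF assms] by (simp add: ev_def)
  define f where "f x = (\<Sum>u\<in>B. (sqrt (ev u) * (u \<bullet> x)) *\<^sub>R u)" for x
  have "linear f"
    by (rule linearI) (simp_all add: f_def inner_add_right scaleR_add_left sum.distrib scaleR_sum_right algebra_simps)
  define S where "S = matrix f"
  have Sv: "S *v x = f x" for x unfolding S_def using \<open>linear f\<close> by (simp add: matrix_works)
  have Su: "S *v u = sqrt (ev u) *\<^sub>R u" if "u \<in> B" for u
    using B that uu[OF that] sum_orthonormal_scaleR_inner[of B u "\<lambda>u. sqrt (ev u)"]
    by (simp add: Sv f_def orthonormal_eigenbasis_def)
  have "transpose S = S"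
    unfolding S_def f_def by (rule transpose_matrix_sum_scaleR_inner)
  moreover have "0 \<le> x \<bullet> (S *v x)" for x
  proof -
    have "x \<bullet> (S *v x) = (\<Sum>u\<in>B. sqrt (ev u) * (u \<bullet> x)\<^sup>2)"
      unfolding Sv f_def by (simp add: inner_sum_right inner_commute power2_eq_square mult.assoc)
    also have "\<dots> \<ge> 0" using ev_nonneg by (intro sum_nonneg) simp
    finally show ?thesis .
  qed
  ultimately have "psd S" by (simp add: psd_def)
  moreover have "S ** S = A"
  proof -
    have "(S ** S) *v x = A *v x" for x
    proof (rule linear_eq_on[of "\<lambda>x. (S ** S) *v x" "\<lambda>x. A *v x" x B])
      fix b assume "b \<in> B"
      then show "(S ** S) *v b = A *v b"
        using Su Au ev_nonneg[of b] by (simp add: matrix_vector_mult_scaleR flip: matrix_vector_mul_assoc)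
    qed (use B in \<open>auto simp: orthonormal_eigenbasis_def\<close>)
    then show ?thesis by (simp add: matrix_eq)
  qed
  ultimately show ?thesis by blast
qed

lemma psd_square_root_unique:
  fixes S T :: "real^'n^'n"
  assumes "psd S" and "S ** S = A" and "psd T" and "T ** T = A"
  shows "S = T"
proof -
  have "transpose A = A"
    using assms(1,2) psdD(1) by (metis matrix_transpose_mul)
  then obtain B where B: "orthonormal_eigenbasis A UNIV B"
    using orthonormal_eigenbasis_exists[OF _ subspace_UNIV] by blast
  have "S *v x = T *v x" for x
  proof (rule linear_eq_on[of "\<lambda>x. S *v x" "\<lambda>x. T *v x" x B])
    fix b assume "b \<in> B"
    then have "A *v b = (b \<bullet> (A *v b)) *\<^sub>R b"
      using B by (simp add: orthonormal_eigenbasis_def)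
    then show "S *v b = T *v b"
      using psd_square_root_on_eigenvector assms by metis
  qed (use B in \<open>auto simp: orthonormal_eigenbasis_def\<close>)
  then show ?thesis by (simp add: matrix_eq)
qed

lemma psd_sqrt:
  fixes A :: "real^'n^'n"
  assumes "psd A"
  shows "psd (psd_sqrt A)" and "psd_sqrt A ** psd_sqrt A = A"
proof -
  have "\<exists>!S. psd S \<and> S ** S = A"
    using psd_square_root_exists[OF assms] psd_square_root_unique by blast
  then have "psd (psd_sqrt A) \<and> psd_sqrt A ** psd_sqrt A = A"
    unfolding psd_sqrt_def by (rule theI')
  then show "psd (psd_sqrt A)" and "psd_sqrt A ** psd_sqrt A = A" by auto
qed

lemma norm_psd_sqrt_mult_vector:
  fixes A :: "real^'n^'n"
  assumes "psd A"
  shows "(norm (psd_sqrt A *v x))\<^sup>2 = x \<bullet> (A *v x)"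
proof -
  let ?S = "psd_sqrt A"
  have "(norm (?S *v x))\<^sup>2 = x \<bullet> (?S *v (?S *v x))"
    using inner_matrix_vector_symmetric[OF psdD(1)[OF psd_sqrt(1)[OF assms]], of x "?S *v x"]
    by (simp add: power2_norm_eq_inner)
  also have "\<dots> = x \<bullet> (A *v x)"
    using psd_sqrt(2)[OF assms] by (simp add: matrix_vector_mul_assoc)
  finally show ?thesis .
qed

lemma inner_axis_matrix_vector_axis:
  fixes M :: "real^'n^'n"
  shows "axis i 1 \<bullet> (M *v axis i 1) = M $ i $ i"
  by (simp add: matrix_vector_mul_component inner_axis inner_commute[of "axis i 1"])

lemma projector_psd_inner_le_trace:
  fixes P Q :: "real^'n^'n"
  assumes symP: "transpose P = P" and "P ** P = P" and "psd Q" and "psd (mat 1 - Q)"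
  shows "(P *v (Q *v x)) \<bullet> (P *v (Q *v x)) \<le> trace (Q ** P) * (x \<bullet> x)"
proof -
  have symQ: "transpose Q = Q" using psdD(1)[OF \<open>psd Q\<close>] .
  let ?e = "\<lambda>i. axis i (1::real) :: real^'n"
  let ?y = "P *v (Q *v x)"
  \<comment> \<open>Each coordinate of \<open>?y\<close> is bounded by Cauchy-Schwarz against the column \<open>Q P e\<^sub>i\<close>,
      and the squared lengths of these columns sum to at most \<open>tr (P Q P)\<close> because \<open>Q\<^sup>2 \<preceq> Q\<close>.\<close>
  have coordinate_le: "(?y $ i)\<^sup>2 \<le> (P ** Q ** P) $ i $ i * (x \<bullet> x)" for i
  proof -
    have "?y $ i = ?e i \<bullet> ?y" by (simp add: inner_axis inner_commute[of "axis i 1"])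
    also have "\<dots> = (P *v ?e i) \<bullet> (Q *v x)" using inner_matrix_vector_symmetric[OF symP] by simp
    also have "\<dots> = (Q *v (P *v ?e i)) \<bullet> x" using inner_matrix_vector_symmetric[OF symQ] by simp
    finally have "(?y $ i)\<^sup>2 \<le> ((Q *v (P *v ?e i)) \<bullet> (Q *v (P *v ?e i))) * (x \<bullet> x)"
      by (simp only: Cauchy_Schwarz_ineq)
    also have "\<dots> \<le> ((P *v ?e i) \<bullet> (Q *v (P *v ?e i))) * (x \<bullet> x)"
      by (rule mult_right_mono[OF psd_contraction_inner_le[OF assms(3,4)]]) simp
    also have "(P *v ?e i) \<bullet> (Q *v (P *v ?e i)) = ?e i \<bullet> ((P ** Q ** P) *v ?e i)"
      using inner_matrix_vector_symmetric[OF symP] by (simp add: matrix_vector_mul_assoc matrix_mul_assoc)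
    also have "\<dots> = (P ** Q ** P) $ i $ i" by (rule inner_axis_matrix_vector_axis)
    finally show ?thesis .
  qed
  have "?y \<bullet> ?y = (\<Sum>i\<in>UNIV. (?y $ i)\<^sup>2)" by (simp add: inner_vec_def power2_eq_square)
  also have "\<dots> \<le> (\<Sum>i\<in>UNIV. (P ** Q ** P) $ i $ i * (x \<bullet> x))"
    using coordinate_le by (intro sum_mono)
  also have "\<dots> = trace (P ** Q ** P) * (x \<bullet> x)" by (simp add: trace_def sum_distrib_right)
  also have "trace (P ** Q ** P) = trace (Q ** P)"
  proof -
    have "trace (P ** (Q ** P)) = trace ((Q ** P) ** P)" by (rule trace_mul_sym)
    also have "(Q ** P) ** P = Q ** P" using \<open>P ** P = P\<close> by (simp flip: matrix_mul_assoc)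
    finally show ?thesis by (simp add: matrix_mul_assoc)
  qed
  finally show ?thesis .
qed

lemma norm_projector_le:
  fixes P :: "real^'n^'n"
  assumes "transpose P = P" and "P ** P = P"
  shows "norm (P *v y) \<le> norm y"
proof -
  have "(norm (P *v y))\<^sup>2 = y \<bullet> (P *v y)"
    using inner_matrix_vector_symmetric[OF assms(1), of y "P *v y"] assms(2)
    by (simp add: matrix_vector_mul_assoc power2_norm_eq_inner)
  also have "\<dots> \<le> norm y * norm (P *v y)" by (rule norm_cauchy_schwarz)
  finally show ?thesis
    by (cases "norm (P *v y) = 0") (auto simp: power2_eq_square)
qed

lemma norm_projector_le_add:
  fixes P Q :: "real^'n^'n"
  assumes "transpose P = P" and "P ** P = P" and "psd Q" and "psd (mat 1 - Q)"
    and "trace ((mat 1 - Q) ** P) \<le> \<delta>\<^sup>2" and "0 \<le> \<delta>"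
  shows "norm (P *v x) \<le> norm (Q *v x) + \<delta> * norm x"
proof -
  let ?z = "(mat 1 - Q) *v x"
  have "psd (mat 1 - (mat 1 - Q))" using \<open>psd Q\<close> by simp
  then have "(norm (P *v ?z))\<^sup>2 \<le> trace ((mat 1 - Q) ** P) * (norm x)\<^sup>2"
    unfolding power2_norm_eq_inner by (rule projector_psd_inner_le_trace[OF assms(1,2,4)])
  also have "\<dots> \<le> (\<delta> * norm x)\<^sup>2"
    unfolding power_mult_distrib using assms(5) by (rule mult_right_mono) simp
  finally have "norm (P *v ?z) \<le> \<delta> * norm x"
    by (rule power2_le_imp_le) (use \<open>0 \<le> \<delta>\<close> in simp)
  moreover have "norm (P *v x) \<le> norm (P *v (Q *v x)) + norm (P *v ?z)"
  proof -
    have "Q *v x + ?z = x" by (simp add: matrix_vector_mult_diff_rdistrib)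
    then have "P *v x = P *v (Q *v x) + P *v ?z" by (metis matrix_vector_right_distrib)
    then show ?thesis by (simp only: norm_triangle_ineq)
  qed
  ultimately show ?thesis
    using norm_projector_le[OF assms(1,2), of "Q *v x"] by linarith
qed

lemma psd_identity_plus_scaleR:
  fixes Q :: "real^'n^'n"
  assumes "psd Q" and "0 \<le> c"
  shows "psd (mat 1 + c *\<^sub>R Q)"
proof -
  have "transpose (mat 1 + c *\<^sub>R Q) = mat 1 + c *\<^sub>R Q"
    using psdD(1)[OF assms(1)] by (simp add: transpose_def mat_def vec_eq_iff)
  moreover have "0 \<le> y \<bullet> ((mat 1 + c *\<^sub>R Q) *v y)" for y
    using psdD(2)[OF assms(1), of y] assms(2)
    by (simp add: matrix_vector_mult_add_rdistrib inner_add_right flip: scaleR_matrix_vector_assoc)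
  ultimately show ?thesis by (simp add: psd_def)
qed

lemma norm_psd_sqrt_identity_plus_leD:
  fixes Q :: "real^'n^'n"
  assumes "psd Q" and "psd (mat 1 - Q)" and "0 < \<rho>"
    and "norm (psd_sqrt (mat 1 + (1 / \<rho>\<^sup>2) *\<^sub>R Q) *v x) \<le> h"
  shows "norm x \<le> h" and "norm (Q *v x) \<le> \<rho> * h"
proof -
  define c where "c = 1 / \<rho>\<^sup>2"
  have "0 < c" using \<open>0 < \<rho>\<close> by (simp add: c_def)
  have "x \<bullet> x + c * (x \<bullet> (Q *v x)) = (norm (psd_sqrt (mat 1 + c *\<^sub>R Q) *v x))\<^sup>2"
    using norm_psd_sqrt_mult_vector[OF psd_identity_plus_scaleR[OF \<open>psd Q\<close> less_imp_le[OF \<open>0 < c\<close>]]]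
    by (simp add: matrix_vector_mult_add_rdistrib inner_add_right flip: scaleR_matrix_vector_assoc)
  also have "\<dots> \<le> h\<^sup>2"
    using assms(4) by (simp add: c_def power_mono)
  finally have quadratic_le: "x \<bullet> x + c * (x \<bullet> (Q *v x)) \<le> h\<^sup>2" .
  have cQx: "0 \<le> c * (x \<bullet> (Q *v x))"
    using psdD(2)[OF \<open>psd Q\<close>] \<open>0 < c\<close> by simp
  have "0 \<le> h" using assms(4) by (meson norm_ge_zero order_trans)
  moreover have "(norm x)\<^sup>2 \<le> h\<^sup>2"
    using quadratic_le cQx by (simp add: power2_norm_eq_inner)
  ultimately show "norm x \<le> h" using power2_le_imp_le by blast
  have "c * (x \<bullet> (Q *v x)) \<le> h\<^sup>2"
    using quadratic_le inner_ge_zero[of x] by linarith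
  then have "\<rho>\<^sup>2 * (c * (x \<bullet> (Q *v x))) \<le> \<rho>\<^sup>2 * h\<^sup>2"
    by (rule mult_left_mono) simp
  have "(norm (Q *v x))\<^sup>2 \<le> x \<bullet> (Q *v x)"
    using psd_contraction_inner_le[OF assms(1,2)] by (simp add: power2_norm_eq_inner)
  also have "\<dots> = \<rho>\<^sup>2 * (c * (x \<bullet> (Q *v x)))"
    using \<open>0 < \<rho>\<close> by (simp add: c_def)
  also have "\<dots> \<le> \<rho>\<^sup>2 * h\<^sup>2" by fact
  also have "\<dots> = (\<rho> * h)\<^sup>2" by (simp only: power_mult_distrib)
  finally show "norm (Q *v x) \<le> \<rho> * h"
    by (rule power2_le_imp_le) (use \<open>0 < \<rho>\<close> \<open>0 \<le> h\<close> in simp)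
qed

theorem corollary4:
  fixes Pstar Phat :: "real^'d^'d" and mstar L :: nat and beta :: "nat \<Rightarrow> real^'d"
    and \<rho> h \<delta> :: real
  assumes "orth_proj mstar Pstar"
    and "L \<ge> 1"
    and "Phat \<in> Aset mstar"
    and "\<forall>P \<in> Aset mstar. objective beta L Phat \<le> objective beta L P"
    and "0 < \<rho>" and "\<rho> < 1" and "0 < h" and "0 \<le> \<delta>"
    and "trace ((mat 1 - Phat) ** Pstar) \<le> \<delta>\<^sup>2"
  shows "\<forall>x :: real^'d. norm (psd_sqrt (mat 1 + (1 / \<rho>\<^sup>2) *\<^sub>R Phat) *v x) \<le> h
           \<longrightarrow> norm (Pstar *v x) \<le> (\<rho> + \<delta>) * h"
proof (intro allI impI)
  fix x :: "real^'d"
  assume Sx: "norm (psd_sqrt (mat 1 + (1 / \<rho>\<^sup>2) *\<^sub>R Phat) *v x) \<le> h"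
  have Pstar: "transpose Pstar = Pstar" "Pstar ** Pstar = Pstar"
    using assms(1) by (auto simp: orth_proj_def)
  have Phat: "psd Phat" "psd (mat 1 - Phat)"
    using assms(3) by (auto simp: Aset_def loewner_le_def)
  note bounds = norm_psd_sqrt_identity_plus_leD[OF Phat \<open>0 < \<rho>\<close> Sx]
  have "norm (Pstar *v x) \<le> norm (Phat *v x) + \<delta> * norm x"
    by (rule norm_projector_le_add[OF Pstar Phat assms(9,8)])
  also have "\<dots> \<le> \<rho> * h + \<delta> * h"
    using bounds(2) mult_left_mono[OF bounds(1) \<open>0 \<le> \<delta>\<close>] by (rule add_mono)
  finally show "norm (Pstar *v x) \<le> (\<rho> + \<delta>) * h"
    by (simp only: distrib_right)
qed

end
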